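(* In the setting described in the context, for every ordered subset $J$ of $\{1,\ldots,|L|\}$ with $1\leqslant |J|\leqslant n-1$, the line $\ell_J$ and the point $p_J$ are well-defined (that is, the intersections defining them are a line, respectively a point). Distinct ordered subsets $J$ give distinct lines $\ell_J$ and distinct points $p_J$. Furthermore, the line $\ell_J$ intersects $\pi_{|J|+1}$ in the point $p_J$.
   Context: Let ${\mathbb K}$ be a field, $n\geqslant 2$, and consider the projective space $\mathrm{PG}_n({\mathbb K})$. For two non-intersecting subspaces $x,y$, $x\oplus y$ denotes the subspace they span. Fix points $x_0,x_1,\ldots,x_n$ of $\mathrm{PG}_n({\mathbb K})$ in general position and put $\Sigma_i=x_0\oplus x_1\oplus\cdots\oplus x_i$ and $\pi_i=x_1\oplus\cdots\oplus x_i$ for $i=1,\ldots,n$. For $i=3,\ldots,n$ let $y_i$ be a point on the line $x_{i-1}\oplus x_i$ different from $x_{i-1}$ and $x_i$. Let $L$ be a finite set of lines of the plane $\Sigma_2$ which meet the line $\pi_2$ in pairwise distinct points, all different from $x_2$. Label the lines of $L$ as $\ell_{\{1\}},\ldots,\ell_{\{|L|\}}$ and put $p_{\{i\}}=\ell_{\{i\}}\cap\pi_2$. An ordered subset $J$ of $\{1,\ldots,|L|\}$ is a finite sequence of distinct elements of $\{1,\ldots,|L|\}$; if $|J|\geqslant 2$ write $J=(\ldots,b,a)$ where $a$ is the last and $b$ the second-to-last element, and let $J\setminus\{a\}$, $J\setminus\{b\}$ be the ordered subsets obtained by deleting $a$, respectively $b$ (keeping the order). For $2\leqslant |J|\leqslant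 n-1$ define recursively $$\ell_J=(x_{|J|+1}\oplus \ell_{J\setminus\{a\}})\cap(y_{|J|+1}\oplus \ell_{J\setminus\{b\}}),\qquad p_J=(x_{|J|+1}\oplus p_{J\setminus\{a\}})\cap(y_{|J|+1}\oplus p_{J\setminus\{b\}}).$$ *)

theory Defs
  imports Complex_Main "HOL-Library.Function_Algebras"
begin

text \<open>Vectors of the underlying vector space K^(n+1) are modelled as functions
  nat => 'k supported on {0..n}. Projective subspaces of PG_n(K) are modelled as
  linear subspaces of this space; projective dimension = linear dimension - 1.\<close>

definition fscale :: "'k::field \<Rightarrow> (nat \<Rightarrow> 'k) \<Rightarrow> (nat \<Rightarrow> 'k)" where
  "fscale c v = (\<lambda>i. c * v i)"

lemma vector_space_fscale: "vector_space (fscale :: 'k::field \<Rightarrow> _)"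
  by (unfold_locales; simp add: fscale_def fun_eq_iff algebra_simps)

definition ambient :: "nat \<Rightarrow> (nat \<Rightarrow> 'k::field) set" where
  "ambient n = {v. \<forall>i>n. v i = 0}"

abbreviation vspan :: "(nat \<Rightarrow> 'k::field) set \<Rightarrow> (nat \<Rightarrow> 'k) set" where
  "vspan \<equiv> module.span fscale"

abbreviation vdim :: "(nat \<Rightarrow> 'k::field) set \<Rightarrow> nat" where
  "vdim \<equiv> vector_space.dim fscale"

definition psub :: "nat \<Rightarrow> nat \<Rightarrow> (nat \<Rightarrow> 'k::field) set \<Rightarrow> bool" where
  "psub n d S \<longleftrightarrow> module.subspace fscale S \<and> S \<subseteq> ambient n \<and> vdim S = d"

abbreviation ppoint :: "nat \<Rightarrow> (nat \<Rightarrow> 'k::field) set \<Rightarrow> bool" where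
  "ppoint n S \<equiv> psub n 1 S"

abbreviation pline :: "nat \<Rightarrow> (nat \<Rightarrow> 'k::field) set \<Rightarrow> bool" where
  "pline n S \<equiv> psub n 2 S"

definition join :: "(nat \<Rightarrow> 'k::field) set \<Rightarrow> (nat \<Rightarrow> 'k) set \<Rightarrow> (nat \<Rightarrow> 'k) set"
  (infixl "\<oplus>\<^sub>P" 65) where
  "A \<oplus>\<^sub>P B = vspan (A \<union> B)"

definition general_position :: "nat \<Rightarrow> (nat \<Rightarrow> (nat \<Rightarrow> 'k::field) set) \<Rightarrow> bool" where
  "general_position n x \<longleftrightarrow> (\<forall>i\<le>n. ppoint n (x i)) \<and>
     (\<forall>I \<subseteq> {0..n}. vdim (vspan (\<Union>i\<in>I. x i)) = card I)"

definition Sigma_sp :: "(nat \<Rightarrow> (nat \<Rightarrow> 'k::field) set) \<Rightarrow> nat \<Rightarrow> (nat \<Rightarrow> 'k) set" where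
  "Sigma_sp x i = vspan (\<Union>j\<in>{0..i}. x j)"

definition pi_sp :: "(nat \<Rightarrow> (nat \<Rightarrow> 'k::field) set) \<Rightarrow> nat \<Rightarrow> (nat \<Rightarrow> 'k) set" where
  "pi_sp x i = vspan (\<Union>j\<in>{1..i}. x j)"

text \<open>For J = (..., b, a):
  J minus a = butlast J; J minus b = butlast (butlast J) @ [last J].\<close>
function rec_sp :: "(nat \<Rightarrow> (nat \<Rightarrow> 'k::field) set) \<Rightarrow> (nat \<Rightarrow> (nat \<Rightarrow> 'k) set)
    \<Rightarrow> (nat \<Rightarrow> (nat \<Rightarrow> 'k) set) \<Rightarrow> nat list \<Rightarrow> (nat \<Rightarrow> 'k) set" where
  "rec_sp x y base J =
    (if length J \<le> 1 then base (hd J)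
     else (x (length J + 1) \<oplus>\<^sub>P rec_sp x y base (butlast J)) \<inter>
          (y (length J + 1) \<oplus>\<^sub>P rec_sp x y base (butlast (butlast J) @ [last J])))"
  by pat_completeness auto
termination
  by (relation "measure (\<lambda>(x, y, base, J). length J)") auto

declare rec_sp.simps[simp del]

definition ellJ where "ellJ x y l J = rec_sp x y l J"
definition pJ where "pJ x y l J = rec_sp x y (\<lambda>i. l i \<inter> pi_sp x 2) J"

definition ordered_subset :: "nat \<Rightarrow> nat list \<Rightarrow> bool" where
  "ordered_subset m J \<longleftrightarrow> distinct J \<and> set J \<subseteq> {1..m}"

end

theory Submission
  imports Defs
begin

text \<open>Induction on the length \<open>k\<close> of \<open>J\<close>. For \<open>k \<ge> 2\<close> write \<open>J = J0 @ [b, a]\<close>, with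
  parents \<open>A = J0 @ [b]\<close> and \<open>B = J0 @ [a]\<close>. By induction \<open>\<ell>\<^sub>A \<noteq> \<ell>\<^sub>B\<close> are lines of \<open>\<Sigma>\<^sub>k\<close> lying in a
  common 3-space \<open>T \<subseteq> \<Sigma>\<^sub>k\<close> through \<open>x\<^sub>k\<close> (\<open>T = \<Sigma>\<^sub>2\<close> for \<open>k = 2\<close>, \<open>T = x\<^sub>k \<oplus> \<ell>\<^sub>J\<^sub>0\<close> otherwise).
  As \<open>y\<^sub>k\<^sub>+\<^sub>1\<close> lies on the line \<open>x\<^sub>k x\<^sub>k\<^sub>+\<^sub>1\<close>, both planes \<open>x\<^sub>k\<^sub>+\<^sub>1 \<oplus> \<ell>\<^sub>A\<close> and \<open>y\<^sub>k\<^sub>+\<^sub>1 \<oplus> \<ell>\<^sub>B\<close> lie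
  in the 4-space \<open>x\<^sub>k\<^sub>+\<^sub>1 \<oplus> T\<close>, so by Grassmann's formula they meet in a line \<open>\<ell>\<^sub>J\<close>, which is not
  contained in \<open>\<Sigma>\<^sub>k\<close>. The same argument one dimension lower, inside \<open>\<pi>\<^sub>k\<close>, yields the point
  \<open>p\<^sub>J\<close>, and the modular law gives \<open>\<ell>\<^sub>J \<inter> \<pi>\<^sub>k\<^sub>+\<^sub>1 = p\<^sub>J\<close>. Projecting \<open>p\<^sub>J\<close> from \<open>x\<^sub>k\<^sub>+\<^sub>1\<close>, resp.
  \<open>y\<^sub>k\<^sub>+\<^sub>1\<close>, back into \<open>\<Sigma>\<^sub>k\<close> recovers \<open>p\<^sub>A\<close> and \<open>p\<^sub>B\<close>, so \<open>p\<^sub>J\<close> determines \<open>J\<close> among ordered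
  subsets of the same length; different lengths are separated by the flags
  \<open>\<Sigma>\<^sub>1 \<subset> \<Sigma>\<^sub>2 \<subset> \<dots>\<close> and \<open>\<pi>\<^sub>1 \<subset> \<pi>\<^sub>2 \<subset> \<dots>\<close>.\<close>

section \<open>Finite-dimensional subspaces of \<open>K\<^sup>\<nat>\<close>\<close>

type_synonym 'a vec = "nat \<Rightarrow> 'a"

interpretation V: vector_space "fscale :: 'a::field \<Rightarrow> 'a vec \<Rightarrow> 'a vec"
  by (rule vector_space_fscale)

text \<open>The ambient space \<open>nat \<Rightarrow> 'a\<close> is infinite-dimensional, so the library's theory of
  finite-dimensional spaces does not apply, and \<open>V.dim\<close> is \<open>0\<close> on sets spanning an
  infinite-dimensional space. Dimension arguments are therefore guarded by \<open>finite_dim\<close>.\<close>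
definition finite_dim :: "'a::field vec set \<Rightarrow> bool" where
  "finite_dim S \<longleftrightarrow> (\<exists>W. finite W \<and> S \<subseteq> V.span W)"

lemma finite_dim_basis:
  assumes "finite_dim T"
  obtains B where "B \<subseteq> T" "V.independent B" "T \<subseteq> V.span B" "card B = V.dim T" "finite B"
proof -
  obtain W where W: "finite W" "T \<subseteq> V.span W" using assms finite_dim_def by blast
  obtain B where B: "B \<subseteq> T" "V.independent B" "T \<subseteq> V.span B" "card B = V.dim T"
    using V.basis_exists by blast
  have "finite B" using V.independent_span_bound[OF W(1) B(2)] B(1) W(2) by blast
  then show ?thesis using B that by blast
qed

lemma finite_dim_subset: "S \<subseteq> T \<Longrightarrow> finite_dim T \<Longrightarrow> finite_dim S"
  unfolding finite_dim_def by blast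

lemma finite_dim_span: "finite_dim T \<Longrightarrow> finite_dim (V.span T)"
  unfolding finite_dim_def by (metis V.span_minimal V.subspace_span)

lemma finite_dim_Un: "finite_dim A \<Longrightarrow> finite_dim B \<Longrightarrow> finite_dim (A \<union> B)"
proof -
  assume "finite_dim A" "finite_dim B"
  then obtain W1 W2 where "finite W1" "A \<subseteq> V.span W1" "finite W2" "B \<subseteq> V.span W2"
    unfolding finite_dim_def by blast
  moreover have "V.span W1 \<subseteq> V.span (W1 \<union> W2)" "V.span W2 \<subseteq> V.span (W1 \<union> W2)"
    by (simp_all add: V.span_mono)
  ultimately show ?thesis unfolding finite_dim_def by (intro exI[of _ "W1 \<union> W2"]) blast
qed

lemma finite_dim_if_dim_pos: "0 < V.dim S \<Longrightarrow> finite_dim S"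
proof -
  assume "0 < V.dim S"
  obtain B where "B \<subseteq> S" "V.independent B" "S \<subseteq> V.span B" "card B = V.dim S"
    using V.basis_exists by blast
  then show ?thesis
    using \<open>0 < V.dim S\<close> card.infinite unfolding finite_dim_def by (metis less_irrefl)
qed

lemma dim_le_if_subset: "S \<subseteq> T \<Longrightarrow> finite_dim T \<Longrightarrow> V.dim S \<le> V.dim T"
proof -
  assume "S \<subseteq> T" "finite_dim T"
  then obtain B where "T \<subseteq> V.span B" "card B = V.dim T" "finite B"
    using finite_dim_basis by metis
  then show ?thesis using V.dim_le_card[of S B] \<open>S \<subseteq> T\<close> by auto
qed

lemma card_le_dim_if_independent:
  assumes "V.independent B" "B \<subseteq> T" "finite_dim T"
  shows "finite B" "card B \<le> V.dim T"
proof -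
  obtain B' where "T \<subseteq> V.span B'" "card B' = V.dim T" "finite B'"
    using finite_dim_basis[OF assms(3)] by metis
  then show "finite B" "card B \<le> V.dim T"
    using V.independent_span_bound[OF _ assms(1), of B'] assms(2) by auto
qed

lemma subspace_eq_if_dim_ge:
  assumes "S \<subseteq> T" "V.subspace S" "finite_dim T" "V.dim T \<le> V.dim S"
  shows "S = T"
proof (rule ccontr)
  assume "S \<noteq> T"
  then obtain t where t: "t \<in> T" "t \<notin> S" using assms(1) by blast
  obtain B where B: "B \<subseteq> S" "V.independent B" "card B = V.dim S" "finite B"
    using finite_dim_basis[OF finite_dim_subset[OF assms(1,3)]] by metis
  have "t \<notin> V.span B" using t V.span_minimal[OF B(1) assms(2)] by blast
  then have "V.independent (insert t B)" using V.independent_insertI B(2) by blast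
  moreover have "insert t B \<subseteq> T" using t B(1) assms(1) by blast
  ultimately have "card (insert t B) \<le> V.dim T" using card_le_dim_if_independent assms(3) by blast
  moreover have "t \<notin> B" using B(1) t by blast
  then have "card (insert t B) = card B + 1" using B(4) by simp
  ultimately show False using B(3) assms(4) by simp
qed

lemma dim_less_if_psubset:
  assumes "S \<subseteq> T" "S \<noteq> T" "V.subspace S" "finite_dim T"
  shows "V.dim S < V.dim T"
  using subspace_eq_if_dim_ge[OF assms(1,3,4)] assms(2) by linarith

lemma subspace_eq_zero_if_dim_0:
  assumes "V.subspace S" "finite_dim S" "V.dim S = 0"
  shows "S = {0}"
proof -
  have "V.subspace {0 :: 'a vec}" using V.subspace_span[of "{}"] by simp
  then show ?thesis
    using subspace_eq_if_dim_ge[of "{0}" S] assms V.subspace_0[OF assms(1)] by simp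
qed

lemma span_Un_span_left: "V.span (V.span A \<union> B) = V.span (A \<union> (B :: 'a::field vec set))"
proof
  have "V.span A \<subseteq> V.span (A \<union> B)" "B \<subseteq> V.span (A \<union> B)"
    using V.span_mono[of A "A \<union> B"] V.span_superset[of "A \<union> B"] by auto
  then show "V.span (V.span A \<union> B) \<subseteq> V.span (A \<union> B)"
    by (intro V.span_minimal) auto
  have "A \<union> B \<subseteq> V.span A \<union> B" using V.span_superset[of A] by auto
  then show "V.span (A \<union> B) \<subseteq> V.span (V.span A \<union> B)" by (rule V.span_mono)
qed

lemma span_Un_span_right: "V.span (A \<union> V.span B) = V.span (A \<union> (B :: 'a::field vec set))"
  using span_Un_span_left[of B A] by (simp add: Un_commute)

lemma dim_span_insert:
  assumes "V.subspace S" "finite_dim S" "v \<notin> S"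
  shows "V.dim (V.span (insert v S)) = V.dim S + 1"
proof -
  obtain B where B: "B \<subseteq> S" "V.independent B" "S \<subseteq> V.span B" "card B = V.dim S" "finite B"
    using finite_dim_basis[OF assms(2)] by metis
  have "V.span B = S" using B(3) V.span_minimal[OF B(1) assms(1)] by blast
  then have "V.independent (insert v B)" using V.independent_insertI B(2) assms(3) by blast
  moreover have "V.span (insert v S) = V.span (insert v B)"
    using span_Un_span_right[of "{v}" B] \<open>V.span B = S\<close> by simp
  moreover have "v \<notin> B" using B(1) assms(3) by blast
  ultimately show ?thesis
    using V.dim_span_eq_card_independent[of "insert v B"] B(4,5) by simp
qed

lemma dim_span_Un_Int_le:
  fixes X Y :: "'a::field vec set"
  assumes "V.subspace X" "V.subspace Y" "finite_dim X" "finite_dim Y"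
  shows "V.dim (V.span (X \<union> Y)) + V.dim (X \<inter> Y) \<le> V.dim X + V.dim Y"
proof -
  have "finite_dim (X \<inter> Y)" using finite_dim_subset[OF _ assms(3)] by blast
  then obtain C where C: "C \<subseteq> X \<inter> Y" "V.independent C" "card C = V.dim (X \<inter> Y)" "finite C"
    using finite_dim_basis by metis
  then have "C \<subseteq> X" by blast
  then obtain B where B: "C \<subseteq> B" "B \<subseteq> X" "V.independent B" "X \<subseteq> V.span B"
    using V.maximal_independent_subset_extend[OF _ C(2)] by metis
  have "finite B" using card_le_dim_if_independent[OF B(3,2) assms(3)] by blast
  have card_B: "card B = V.dim X" using V.basis_card_eq_dim B by blast
  obtain D where D: "Y \<subseteq> V.span D" "card D = V.dim Y" "finite D"
    using finite_dim_basis[OF assms(4)] by metis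
  let ?E = "(B - C) \<union> D"
  have span_D: "V.span D \<subseteq> V.span ?E" by (rule V.span_mono) blast
  have "B \<subseteq> V.span ?E"
  proof
    fix b assume "b \<in> B"
    show "b \<in> V.span ?E"
    proof (cases "b \<in> C")
      case True
      then show ?thesis using C(1) D(1) span_D by blast
    next
      case False
      then show ?thesis using \<open>b \<in> B\<close> by (intro V.span_base) blast
    qed
  qed
  then have "V.span B \<subseteq> V.span ?E" by (rule V.span_minimal) simp
  then have "X \<union> Y \<subseteq> V.span ?E" using B(4) D(1) span_D by blast
  then have "V.span (X \<union> Y) \<subseteq> V.span ?E" by (rule V.span_minimal) simp
  then have "V.dim (V.span (X \<union> Y)) \<le> card ?E"
    by (rule V.dim_le_card) (simp add: \<open>finite B\<close> D(3))
  also have "\<dots> \<le> card (B - C) + card D" by (rule card_Un_le)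
  also have "card (B - C) = card B - card C" using B(1) C(4) by (simp add: card_Diff_subset)
  finally show ?thesis using card_mono[OF \<open>finite B\<close> B(1)] card_B C(3) D(2) by linarith
qed

text \<open>Induction on \<open>dim X\<close>, splitting off a basis vector \<open>v\<close> of \<open>X = v \<oplus> X0\<close>: if \<open>v\<close>
  lies in \<open>X0 \<oplus> Y\<close>, the join does not grow but \<open>X \<inter> Y\<close> does; otherwise the join grows.\<close>
lemma dim_span_Un_Int_ge:
  fixes X Y :: "'a::field vec set"
  assumes "V.subspace X" "V.subspace Y" "finite_dim X" "finite_dim Y"
  shows "V.dim X + V.dim Y \<le> V.dim (V.span (X \<union> Y)) + V.dim (X \<inter> Y)"
  using assms(1,3)
proof (induction "V.dim X" arbitrary: X)
  case 0
  then have "X = {0}" using subspace_eq_zero_if_dim_0[of X] by simp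
  moreover have "0 \<in> Y" using V.subspace_0[OF assms(2)] .
  ultimately have "V.span (X \<union> Y) = Y" using assms(2) by (simp add: insert_absorb)
  then show ?case using 0 by simp
next
  case (Suc d)
  obtain B where B: "B \<subseteq> X" "V.independent B" "X \<subseteq> V.span B" "card B = V.dim X" "finite B"
    using finite_dim_basis[OF Suc.prems(2)] by metis
  have X_eq: "V.span B = X" using B(1,3) V.span_minimal[OF B(1) Suc.prems(1)] by blast
  obtain v where v: "v \<in> B" using B(4) Suc.hyps(2) by fastforce
  define X0 where "X0 = V.span (B - {v})"
  have X0: "V.subspace X0" "finite_dim X0" "X0 \<subseteq> X" "v \<in> X" "v \<notin> X0"
    using B(1,2,5) v V.span_mono[of "B - {v}" B] X_eq
    unfolding X0_def finite_dim_def V.dependent_def by auto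
  have "V.dim X0 = d"
    using V.dim_span_eq_card_independent[of "B - {v}"] V.independent_mono[OF B(2)] B(4,5) v Suc.hyps(2)
    unfolding X0_def by auto
  define Z where "Z = V.span (X0 \<union> Y)"
  have IH: "V.dim X0 + V.dim Y \<le> V.dim Z + V.dim (X0 \<inter> Y)"
    unfolding Z_def using Suc.hyps(1) X0(1,2) \<open>V.dim X0 = d\<close> by blast
  have "V.span (insert v Z) = V.span ({v} \<union> ((B - {v}) \<union> Y))"
    using span_Un_span_right[of "{v}" "B - {v} \<union> Y"] span_Un_span_left[of "B - {v}" Y]
    unfolding Z_def X0_def by simp
  also have "{v} \<union> ((B - {v}) \<union> Y) = B \<union> Y" using v by blast
  finally have XY: "V.span (X \<union> Y) = V.span (insert v Z)"
    using span_Un_span_left[of B Y] X_eq by simp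
  have fin_Z: "finite_dim Z" unfolding Z_def using finite_dim_span finite_dim_Un X0(2) assms(4) by blast
  have fin_XY: "finite_dim (X \<inter> Y)" using finite_dim_subset[OF _ Suc.prems(2)] by blast
  have "X0 \<inter> Y \<subseteq> X \<inter> Y" using X0(3) by blast
  show ?case
  proof (cases "v \<in> Z")
    case True
    then have "insert v Z = Z" by blast
    then have "V.span (X \<union> Y) = Z" unfolding XY Z_def by (simp add: V.span_span)
    obtain a b where ab: "v = a + b" "a \<in> X0" "b \<in> Y"
      using True V.span_eq_iff[THEN iffD2, OF X0(1)] V.span_eq_iff[THEN iffD2, OF assms(2)]
      unfolding Z_def V.span_Un by auto
    have "b \<in> X" using V.subspace_diff[OF Suc.prems(1) X0(4), of a] ab X0(3) by auto
    moreover have "b \<notin> X0" using ab X0(1,5) V.subspace_add by force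
    ultimately have "X0 \<inter> Y \<noteq> X \<inter> Y" using ab(3) by blast
    then have "V.dim (X0 \<inter> Y) < V.dim (X \<inter> Y)"
      using dim_less_if_psubset \<open>X0 \<inter> Y \<subseteq> X \<inter> Y\<close> V.subspace_inter[OF X0(1) assms(2)] fin_XY
      by blast
    then show ?thesis using IH \<open>V.span (X \<union> Y) = Z\<close> \<open>V.dim X0 = d\<close> Suc.hyps(2) by simp
  next
    case False
    have "V.subspace Z" unfolding Z_def by (rule V.subspace_span)
    then have "V.dim (V.span (X \<union> Y)) = V.dim Z + 1"
      unfolding XY by (rule dim_span_insert[OF _ fin_Z False])
    moreover have "V.dim (X0 \<inter> Y) \<le> V.dim (X \<inter> Y)"
      using dim_le_if_subset \<open>X0 \<inter> Y \<subseteq> X \<inter> Y\<close> fin_XY by blast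
    ultimately show ?thesis using IH \<open>V.dim X0 = d\<close> Suc.hyps(2) by linarith
  qed
qed

section \<open>Joins\<close>

lemma dim_join_Int:
  fixes X Y :: "'a::field vec set"
  assumes "V.subspace X" "V.subspace Y" "finite_dim X" "finite_dim Y"
  shows "V.dim (X \<oplus>\<^sub>P Y) + V.dim (X \<inter> Y) = V.dim X + V.dim Y"
  unfolding join_def using dim_span_Un_Int_le[OF assms] dim_span_Un_Int_ge[OF assms] by linarith

lemma subspace_join: "V.subspace ((A :: 'a::field vec set) \<oplus>\<^sub>P B)"
  unfolding join_def by (rule V.subspace_span)

lemma finite_dim_join: "finite_dim A \<Longrightarrow> finite_dim B \<Longrightarrow> finite_dim (A \<oplus>\<^sub>P B)"
  unfolding join_def by (intro finite_dim_span finite_dim_Un)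

lemma subset_join1: "V.subspace A \<Longrightarrow> A \<subseteq> (A :: 'a::field vec set) \<oplus>\<^sub>P B"
  unfolding join_def using V.span_superset[of "A \<union> B"] by auto

lemma subset_join2: "V.subspace B \<Longrightarrow> B \<subseteq> (A :: 'a::field vec set) \<oplus>\<^sub>P B"
  unfolding join_def using V.span_superset[of "A \<union> B"] by auto

lemma join_least: "A \<subseteq> C \<Longrightarrow> B \<subseteq> C \<Longrightarrow> V.subspace C \<Longrightarrow> (A :: 'a::field vec set) \<oplus>\<^sub>P B \<subseteq> C"
  unfolding join_def by (intro V.span_minimal) auto

lemma join_mono: "A \<subseteq> A' \<Longrightarrow> B \<subseteq> B' \<Longrightarrow> (A :: 'a::field vec set) \<oplus>\<^sub>P B \<subseteq> A' \<oplus>\<^sub>P B'"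
  unfolding join_def by (intro V.span_mono) auto

lemma join_commute: "(A :: 'a::field vec set) \<oplus>\<^sub>P B = B \<oplus>\<^sub>P A"
  unfolding join_def by (simp add: Un_commute)

lemma join_span: "V.span (A :: 'a::field vec set) \<oplus>\<^sub>P V.span B = V.span (A \<union> B)"
  unfolding join_def span_Un_span_left span_Un_span_right ..

lemma dim_join_le:
  fixes X Y :: "'a::field vec set"
  assumes "V.subspace X" "V.subspace Y" "finite_dim X" "finite_dim Y"
  shows "V.dim (X \<oplus>\<^sub>P Y) \<le> V.dim X + V.dim Y"
  using dim_join_Int[OF assms] by linarith

lemma join_Int_modular:
  fixes A B C :: "'a::field vec set"
  assumes "V.subspace A" "V.subspace B" "V.subspace C" "A \<subseteq> C"
  shows "(A \<oplus>\<^sub>P B) \<inter> C = A \<oplus>\<^sub>P (B \<inter> C)"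
proof
  show "A \<oplus>\<^sub>P (B \<inter> C) \<subseteq> (A \<oplus>\<^sub>P B) \<inter> C"
    using join_mono[of A A "B \<inter> C" B] join_least[OF assms(4) _ assms(3), of "B \<inter> C"] by blast
  show "(A \<oplus>\<^sub>P B) \<inter> C \<subseteq> A \<oplus>\<^sub>P (B \<inter> C)"
  proof
    fix v assume v: "v \<in> (A \<oplus>\<^sub>P B) \<inter> C"
    then obtain a b where ab: "v = a + b" "a \<in> A" "b \<in> B"
      using V.span_eq_iff[THEN iffD2, OF assms(1)] V.span_eq_iff[THEN iffD2, OF assms(2)]
      unfolding join_def V.span_Un by auto
    have "b = v - a" using ab(1) by simp
    then have "b \<in> C" using v ab(2) assms(3,4) V.subspace_diff by blast
    then show "v \<in> A \<oplus>\<^sub>P (B \<inter> C)"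
      unfolding join_def using ab by (metis IntI UnI1 UnI2 V.span_add V.span_base)
  qed
qed

lemma join_Int_eq_if_Int_zero:
  fixes z S S' :: "'a::field vec set"
  assumes "V.subspace z" "V.subspace S" "V.subspace S'" "S' \<subseteq> S" "z \<inter> S = {0}"
  shows "(z \<oplus>\<^sub>P S') \<inter> S = S'"
proof -
  have "(z \<oplus>\<^sub>P S') \<inter> S = (S' \<oplus>\<^sub>P z) \<inter> S" by (simp add: join_commute)
  also have "\<dots> = S' \<oplus>\<^sub>P {0}" using join_Int_modular[OF assms(3,1,2,4)] assms(5) by simp
  also have "\<dots> = S'" using join_least[of S' S' "{0}"] subset_join1[of S' "{0}"] assms(3)
    V.subspace_0 by auto
  finally show ?thesis .
qed

lemma point_subset_or_Int_zero:
  fixes P S :: "'a::field vec set"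
  assumes "V.subspace P" "V.dim P = 1" "V.subspace S"
  shows "P \<subseteq> S \<or> P \<inter> S = {0}"
proof -
  have fin: "finite_dim P" by (rule finite_dim_if_dim_pos) (simp add: assms(2))
  then have fin_PS: "finite_dim (P \<inter> S)" using finite_dim_subset by blast
  have sub: "V.subspace (P \<inter> S)" using V.subspace_inter[OF assms(1,3)] .
  have "V.dim (P \<inter> S) \<le> 1" using dim_le_if_subset[OF _ fin, of "P \<inter> S"] assms(2) by simp
  then consider "V.dim (P \<inter> S) = 0" | "V.dim (P \<inter> S) = 1" by linarith
  then show ?thesis
  proof cases
    case 1
    then show ?thesis using subspace_eq_zero_if_dim_0[OF sub fin_PS] by simp
  next
    case 2
    then have "P \<inter> S = P" using subspace_eq_if_dim_ge[OF _ sub fin] assms(2) by simp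
    then show ?thesis by blast
  qed
qed

lemma points_eq_if_subset:
  fixes P Q :: "'a::field vec set"
  assumes "V.subspace P" "V.dim P = 1" "V.dim Q = 1" "P \<subseteq> Q"
  shows "P = Q"
  using subspace_eq_if_dim_ge[OF assms(4,1)] finite_dim_if_dim_pos[of Q] assms(2,3) by simp

lemma dim_join_point:
  fixes P S :: "'a::field vec set"
  assumes "V.subspace P" "V.dim P = 1" "V.subspace S" "finite_dim S" "\<not> P \<subseteq> S"
  shows "V.dim (P \<oplus>\<^sub>P S) = V.dim S + 1"
proof -
  have "finite_dim P" by (rule finite_dim_if_dim_pos) (simp add: assms(2))
  then have "V.dim (P \<oplus>\<^sub>P S) \<le> V.dim S + 1" using dim_join_le[OF assms(1,3)] assms(2,4) by simp
  moreover have "S \<noteq> P \<oplus>\<^sub>P S" using subset_join1[OF assms(1), of S] assms(5) by auto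
  then have "V.dim S < V.dim (P \<oplus>\<^sub>P S)"
    using dim_less_if_psubset[OF subset_join2[OF assms(3)] _ assms(3)]
      finite_dim_join[OF \<open>finite_dim P\<close> assms(4)] by blast
  ultimately show ?thesis by linarith
qed

lemma join_point_eq:
  fixes z Q R :: "'a::field vec set"
  assumes z: "V.subspace z" "V.dim z = 1" and Q: "V.subspace Q" "V.dim Q = 1"
    and R: "V.subspace R" "V.dim R = 1"
    and "\<not> z \<subseteq> R" "Q \<subseteq> z \<oplus>\<^sub>P R" "Q \<noteq> z"
  shows "z \<oplus>\<^sub>P Q = z \<oplus>\<^sub>P R"
proof -
  have fin: "finite_dim Q" "finite_dim R"
    by (rule finite_dim_if_dim_pos, simp add: Q(2) R(2))+
  have "\<not> z \<subseteq> Q" using points_eq_if_subset[OF z Q(2)] assms(9) by blast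
  then have "V.dim (z \<oplus>\<^sub>P Q) = V.dim (z \<oplus>\<^sub>P R)"
    using dim_join_point[OF z Q(1) fin(1)] dim_join_point[OF z R(1) fin(2)] assms(7) Q(2) R(2) by simp
  moreover have "z \<oplus>\<^sub>P Q \<subseteq> z \<oplus>\<^sub>P R"
    using join_least[OF subset_join1[OF z(1)] assms(8) subspace_join] .
  moreover have "finite_dim (z \<oplus>\<^sub>P R)"
    using finite_dim_join[OF finite_dim_if_dim_pos fin(2)] z(2) by simp
  ultimately show ?thesis using subspace_eq_if_dim_ge[OF _ subspace_join] by (metis order_refl)
qed

lemma not_subset_if_Int_zero:
  fixes z S :: "'a::field vec set"
  assumes "V.dim z = 1" "z \<inter> S = {0}"
  shows "\<not> z \<subseteq> S"
proof
  assume "z \<subseteq> S"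
  then have "z = {0}" using assms(2) by blast
  moreover have "V.dim {0 :: 'a vec} = V.dim ({} :: 'a vec set)"
    using V.dim_span[of "{} :: 'a vec set"] by simp
  then have "V.dim {0 :: 'a vec} = 0"
    using V.dim_eq_card_independent[OF V.independent_empty] by simp
  ultimately show False using assms(1) by simp
qed

lemma join_Int_eq_if_collinear:
  fixes z Q R S :: "'a::field vec set"
  assumes z: "V.subspace z" "V.dim z = 1" "z \<inter> S = {0}"
    and Q: "V.subspace Q" "V.dim Q = 1" "Q \<subseteq> z \<oplus>\<^sub>P R" "Q \<noteq> z"
    and R: "V.subspace R" "V.dim R = 1" "R \<subseteq> S"
    and S: "V.subspace S"
  shows "(z \<oplus>\<^sub>P Q) \<inter> S = R"
proof -
  have "\<not> z \<subseteq> R" using not_subset_if_Int_zero[OF z(2,3)] R(3) by blast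
  then have "z \<oplus>\<^sub>P Q = z \<oplus>\<^sub>P R" using join_point_eq[OF z(1,2) Q(1,2) R(1,2)] Q(3,4) by blast
  then show ?thesis using join_Int_eq_if_Int_zero[OF z(1) S R(1,3) z(3)] by simp
qed

text \<open>Both cones lie in \<open>z1 \<oplus> T\<close> (this is where \<open>z2 \<subseteq> z1 \<oplus> T\<close> is used), of dimension at
  most \<open>r + 2\<close>, so they meet in dimension \<open>r\<close>; the meet is not inside \<open>S\<close>, as it would then
  lie in \<open>S1 \<inter> S2\<close>.\<close>
lemma cones_Int:
  fixes S T S1 S2 z1 z2 :: "'a::field vec set"
  assumes S: "V.subspace S"
    and z1: "V.subspace z1" "V.dim z1 = 1" "z1 \<inter> S = {0}"
    and z2: "V.subspace z2" "V.dim z2 = 1" "z2 \<inter> S = {0}"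
    and T: "V.subspace T" "finite_dim T" "T \<subseteq> S" "z2 \<subseteq> z1 \<oplus>\<^sub>P T" "V.dim T \<le> r + 1"
    and S12: "V.subspace S1" "V.subspace S2" "S1 \<subseteq> T" "S2 \<subseteq> T"
      "V.dim S1 = r" "V.dim S2 = r" "S1 \<noteq> S2"
  shows "V.dim ((z1 \<oplus>\<^sub>P S1) \<inter> (z2 \<oplus>\<^sub>P S2)) = r"
    and "\<not> (z1 \<oplus>\<^sub>P S1) \<inter> (z2 \<oplus>\<^sub>P S2) \<subseteq> S"
proof -
  let ?U = "z1 \<oplus>\<^sub>P S1" and ?W = "z2 \<oplus>\<^sub>P S2"
  have fin: "finite_dim S1" "finite_dim S2" "finite_dim z1" "finite_dim z2"
    using finite_dim_subset[OF S12(3) T(2)] finite_dim_subset[OF S12(4) T(2)]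
      finite_dim_if_dim_pos[of z1] finite_dim_if_dim_pos[of z2] z1(2) z2(2) by simp_all
  have U_S: "?U \<inter> S = S1" and W_S: "?W \<inter> S = S2"
    using join_Int_eq_if_Int_zero[OF z1(1) S S12(1)] join_Int_eq_if_Int_zero[OF z2(1) S S12(2)]
      S12(3,4) T(3) z1(3) z2(3) by auto
  have dim_U: "V.dim ?U = r + 1" and dim_W: "V.dim ?W = r + 1"
    using dim_join_point[OF z1(1,2) S12(1) fin(1)] dim_join_point[OF z2(1,2) S12(2) fin(2)]
      not_subset_if_Int_zero[OF z1(2,3)] not_subset_if_Int_zero[OF z2(2,3)] S12 T(3) by auto
  have fin_UW: "finite_dim ?U" "finite_dim ?W" using finite_dim_join fin by blast+
  have "?U \<subseteq> z1 \<oplus>\<^sub>P T" by (rule join_mono[OF subset_refl S12(3)])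
  moreover have "?W \<subseteq> z1 \<oplus>\<^sub>P T"
    using join_least[OF T(4) _ subspace_join] S12(4) subset_join2[OF T(1), of z1] by blast
  ultimately have "?U \<oplus>\<^sub>P ?W \<subseteq> z1 \<oplus>\<^sub>P T" using join_least subspace_join by blast
  then have "V.dim (?U \<oplus>\<^sub>P ?W) \<le> V.dim (z1 \<oplus>\<^sub>P T)"
    using dim_le_if_subset finite_dim_join[OF fin(3) T(2)] by blast
  also have "\<dots> \<le> r + 2" using dim_join_le[OF z1(1) T(1) fin(3) T(2)] z1(2) T(5) by linarith
  finally have "r \<le> V.dim (?U \<inter> ?W)"
    using dim_join_Int[OF subspace_join subspace_join fin_UW] dim_U dim_W by linarith
  moreover have "?U \<noteq> ?W" using U_S W_S S12(7) by metis
  then have "?U \<inter> ?W \<noteq> ?U"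
    using subspace_eq_if_dim_ge[of ?U ?W] subspace_join fin_UW dim_U dim_W by auto
  then have "V.dim (?U \<inter> ?W) < V.dim ?U"
    using dim_less_if_psubset[OF _ _ V.subspace_inter[OF subspace_join subspace_join] fin_UW(1)]
    by blast
  ultimately show dim_UW: "V.dim (?U \<inter> ?W) = r" using dim_U by linarith
  show "\<not> ?U \<inter> ?W \<subseteq> S"
  proof
    assume "?U \<inter> ?W \<subseteq> S"
    then have "?U \<inter> ?W \<subseteq> S1 \<inter> S2" using U_S W_S by blast
    moreover have fin12: "finite_dim (S1 \<inter> S2)" using finite_dim_subset[OF _ fin(1)] by blast
    ultimately have "r \<le> V.dim (S1 \<inter> S2)" using dim_le_if_subset dim_UW by metis
    have "S1 \<inter> S2 \<subseteq> S1" "S1 \<inter> S2 \<subseteq> S2" by blast+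
    then have "S1 \<inter> S2 = S1" "S1 \<inter> S2 = S2"
      using subspace_eq_if_dim_ge[OF _ V.subspace_inter[OF S12(1,2)]] fin(1,2) S12(5,6)
        \<open>r \<le> V.dim (S1 \<inter> S2)\<close> by simp_all
    then show False using S12(7) by blast
  qed
qed

section \<open>Spans of points in general position\<close>

definition span_points :: "(nat \<Rightarrow> 'a::field vec set) \<Rightarrow> nat set \<Rightarrow> 'a vec set" where
  "span_points x I = vspan (\<Union>i\<in>I. x i)"

lemma Sigma_sp_eq: "Sigma_sp x k = span_points x {0..k}"
  unfolding Sigma_sp_def span_points_def ..

lemma pi_sp_eq: "pi_sp x k = span_points x {1..k}"
  unfolding pi_sp_def span_points_def ..

lemma subspace_span_points: "V.subspace (span_points x I)"
  unfolding span_points_def by (rule V.subspace_span)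

lemma span_points_mono: "I \<subseteq> K \<Longrightarrow> span_points x I \<subseteq> span_points x K"
  unfolding span_points_def by (intro V.span_mono) auto

lemma join_span_points: "span_points x I \<oplus>\<^sub>P span_points x K = span_points x (I \<union> K)"
  unfolding span_points_def join_span by (simp add: UN_Un)

lemma span_points_empty: "span_points x {} = {0}"
  unfolding span_points_def by simp

context
  fixes n :: nat and x :: "nat \<Rightarrow> 'a::field vec set"
  assumes gp: "general_position n x"
begin

lemma point_of_general_position:
  assumes "i \<le> n"
  shows "V.subspace (x i)" "V.dim (x i) = 1" "finite_dim (x i)" "x i \<subseteq> ambient n"
  using gp assms finite_dim_if_dim_pos[of "x i"] unfolding general_position_def psub_def by auto

lemma span_points_singleton: "i \<le> n \<Longrightarrow> span_points x {i} = x i"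
  unfolding span_points_def using point_of_general_position by simp

lemma dim_span_points: "I \<subseteq> {0..n} \<Longrightarrow> V.dim (span_points x I) = card I"
  using gp unfolding general_position_def span_points_def by auto

lemma finite_dim_span_points:
  assumes "I \<subseteq> {0..n}"
  shows "finite_dim (span_points x I)"
proof (cases "I = {}")
  case True
  then show ?thesis unfolding finite_dim_def span_points_def by (intro exI[of _ "{}"]) auto
next
  case False
  moreover have "finite I" by (rule finite_subset[OF assms]) simp
  ultimately have "card I \<noteq> 0" by simp
  then show ?thesis by (intro finite_dim_if_dim_pos) (simp add: dim_span_points[OF assms])
qed

lemma span_points_Int:
  assumes I: "I \<subseteq> {0..n}" and K: "K \<subseteq> {0..n}"
  shows "span_points x I \<inter> span_points x K = span_points x (I \<inter> K)"
proof -
  have "finite I" "finite K" by (rule finite_subset[OF I], simp, rule finite_subset[OF K], simp)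
  then have "card (I \<union> K) + card (I \<inter> K) = card I + card K" using card_Un_Int[of I K] by linarith
  moreover have "V.dim (span_points x I \<oplus>\<^sub>P span_points x K) = card (I \<union> K)"
    unfolding join_span_points using dim_span_points I K by simp
  moreover have "V.dim (span_points x (I \<inter> K)) = card (I \<inter> K)"
    by (rule dim_span_points) (use I in blast)
  ultimately have "V.dim (span_points x I \<inter> span_points x K) \<le> V.dim (span_points x (I \<inter> K))"
    using dim_join_Int[OF subspace_span_points subspace_span_points
        finite_dim_span_points[OF I] finite_dim_span_points[OF K]]
      dim_span_points[OF I] dim_span_points[OF K] by linarith
  moreover have "span_points x (I \<inter> K) \<subseteq> span_points x I \<inter> span_points x K"
    using span_points_mono[of "I \<inter> K"] by blast
  moreover have "finite_dim (span_points x I \<inter> span_points x K)"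
    using finite_dim_subset[OF _ finite_dim_span_points[OF I]] by blast
  ultimately show ?thesis using subspace_eq_if_dim_ge[OF _ subspace_span_points] by blast
qed

end

section \<open>The configuration\<close>

lemma ambient_subspace: "V.subspace (ambient n :: 'a::field vec set)"
  unfolding V.subspace_def ambient_def fscale_def by auto

lemma ordered_subset_butlast:
  assumes "ordered_subset m (J0 @ [b, a])"
  shows "ordered_subset m (J0 @ [b])" "ordered_subset m (J0 @ [a])" "ordered_subset m J0" "a \<noteq> b"
  using assms unfolding ordered_subset_def by auto

lemma split_last_two:
  assumes "2 \<le> length J"
  obtains J0 b a where "J = J0 @ [b, a]" "length J0 = length J - 2"
proof -
  obtain J1 a where "J = J1 @ [a]" using assms by (cases J rule: rev_exhaust) auto
  moreover obtain J0 b where "J1 = J0 @ [b]"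
    using assms calculation by (cases J1 rule: rev_exhaust) auto
  ultimately show ?thesis using that by simp
qed

locale configuration =
  fixes n m :: nat and x y l :: "nat \<Rightarrow> 'a::field vec set"
  assumes n2: "n \<ge> 2"
    and gp: "general_position n x"
    and y_pt: "\<And>i. 3 \<le> i \<Longrightarrow> i \<le> n \<Longrightarrow>
        ppoint n (y i) \<and> y i \<subseteq> x (i - 1) \<oplus>\<^sub>P x i \<and> y i \<noteq> x (i - 1) \<and> y i \<noteq> x i"
    and l_line: "\<And>i. i \<in> {1..m} \<Longrightarrow> pline n (l i) \<and> l i \<subseteq> Sigma_sp x 2"
    and l_meet: "\<And>i. i \<in> {1..m} \<Longrightarrow> ppoint n (l i \<inter> pi_sp x 2) \<and> l i \<inter> pi_sp x 2 \<noteq> x 2"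
    and l_dist: "\<And>i j. i \<in> {1..m} \<Longrightarrow> j \<in> {1..m} \<Longrightarrow> i \<noteq> j \<Longrightarrow>
        l i \<inter> pi_sp x 2 \<noteq> l j \<inter> pi_sp x 2"
begin

abbreviation "Sg k \<equiv> Sigma_sp x k"
abbreviation "Pi k \<equiv> pi_sp x k"
abbreviation "L J \<equiv> ellJ x y l J"
abbreviation "P J \<equiv> pJ x y l J"

lemmas x_point = point_of_general_position[OF gp]

lemma subspace_Sg_Pi: "V.subspace (Sg k)" "V.subspace (Pi k)"
  unfolding Sigma_sp_eq pi_sp_eq by (rule subspace_span_points)+

lemma finite_dim_Sg_Pi: "k \<le> n \<Longrightarrow> finite_dim (Sg k)" "k \<le> n \<Longrightarrow> finite_dim (Pi k)"
  unfolding Sigma_sp_eq pi_sp_eq by (rule finite_dim_span_points[OF gp]; auto)+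

lemma dim_Sg_Pi: "k \<le> n \<Longrightarrow> V.dim (Sg k) = k + 1" "k \<le> n \<Longrightarrow> V.dim (Pi k) = k"
  unfolding Sigma_sp_eq pi_sp_eq by (subst dim_span_points[OF gp]; auto)+

lemma Sg_Pi_mono: "i \<le> k \<Longrightarrow> Sg i \<subseteq> Sg k" "i \<le> k \<Longrightarrow> Pi i \<subseteq> Pi k"
  unfolding Sigma_sp_eq pi_sp_eq by (rule span_points_mono; auto)+

lemma Pi_subset_Sg: "Pi k \<subseteq> Sg k"
  unfolding Sigma_sp_eq pi_sp_eq by (rule span_points_mono) auto

lemma x_subset_Sg: "i \<le> k \<Longrightarrow> k \<le> n \<Longrightarrow> x i \<subseteq> Sg k"
  unfolding Sigma_sp_eq using span_points_singleton[OF gp, of i] span_points_mono[of "{i}" "{0..k}" x]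
  by auto

lemma x_subset_Pi: "1 \<le> i \<Longrightarrow> i \<le> k \<Longrightarrow> k \<le> n \<Longrightarrow> x i \<subseteq> Pi k"
  unfolding pi_sp_eq using span_points_singleton[OF gp, of i] span_points_mono[of "{i}" "{1..k}" x]
  by auto

lemma x_Int_Sg: "k + 1 \<le> n \<Longrightarrow> x (k + 1) \<inter> Sg k = {0}"
  unfolding Sigma_sp_eq using span_points_singleton[OF gp, of "k + 1"]
    span_points_Int[OF gp, of "{k + 1}" "{0..k}"] span_points_empty[of x] by auto

lemma Sg_Int_Pi: "k + 1 \<le> n \<Longrightarrow> Sg k \<inter> Pi (k + 1) = Pi k"
proof -
  assume "k + 1 \<le> n"
  moreover have "{0..k} \<inter> {1..k + 1} = {1..k}" by auto
  ultimately show ?thesis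
    unfolding Sigma_sp_eq pi_sp_eq using span_points_Int[OF gp, of "{0..k}" "{1..k + 1}"] by auto
qed

lemma Sg_subset_ambient: "k \<le> n \<Longrightarrow> Sg k \<subseteq> ambient n"
  unfolding Sigma_sp_def
proof (intro V.span_minimal[OF _ ambient_subspace] UN_least)
  fix j assume "k \<le> n" "j \<in> {0..k}"
  then show "x j \<subseteq> ambient n" using x_point(4) by simp
qed

context
  fixes K :: nat
  assumes K: "2 \<le> K" "K + 1 \<le> n"
begin

lemma y_point:
  shows "V.subspace (y (K + 1))" "V.dim (y (K + 1)) = 1" "finite_dim (y (K + 1))"
    and "y (K + 1) \<subseteq> x (K + 1) \<oplus>\<^sub>P x K" "y (K + 1) \<noteq> x K" "y (K + 1) \<noteq> x (K + 1)"
  using y_pt[of "K + 1"] K finite_dim_if_dim_pos[of "y (K + 1)"]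
  unfolding psub_def by (auto simp: join_commute)

lemma x_not_subset_x: "\<not> x (K + 1) \<subseteq> x K"
  using not_subset_if_Int_zero[OF x_point(2) x_Int_Sg] x_subset_Sg[of K K] K by auto

lemma y_Int_Sg: "y (K + 1) \<inter> Sg K = {0}"
proof -
  have "\<not> y (K + 1) \<subseteq> Sg K"
  proof
    assume "y (K + 1) \<subseteq> Sg K"
    then have "y (K + 1) \<subseteq> (x (K + 1) \<oplus>\<^sub>P x K) \<inter> Sg K" using y_point(4) by blast
    also have "\<dots> = x K"
      using join_Int_eq_if_Int_zero[OF x_point(1) subspace_Sg_Pi(1) x_point(1) x_subset_Sg x_Int_Sg] K
      by simp
    finally have "y (K + 1) = x K" using points_eq_if_subset[OF y_point(1,2) x_point(2)] K by simp
    then show False using y_point(5) by contradiction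
  qed
  then show ?thesis using point_subset_or_Int_zero[OF y_point(1,2) subspace_Sg_Pi(1)] by blast
qed

lemma x_subset_join_x_y: "x K \<subseteq> x (K + 1) \<oplus>\<^sub>P y (K + 1)"
proof -
  have "x (K + 1) \<oplus>\<^sub>P y (K + 1) = x (K + 1) \<oplus>\<^sub>P x K"
    using join_point_eq[OF x_point(1,2) y_point(1,2) x_point(1,2)] x_not_subset_x y_point(4,6) K
    by simp
  then show ?thesis using subset_join2[OF x_point(1)] K by simp
qed

lemma y_subset_Pi: "y (K + 1) \<subseteq> Pi (K + 1)"
proof -
  have "x (K + 1) \<oplus>\<^sub>P x K \<subseteq> Pi (K + 1)"
    using join_least[OF x_subset_Pi x_subset_Pi subspace_Sg_Pi(2)] K by simp
  then show ?thesis using y_point(4) by blast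
qed

lemma cones_Int_step:
  assumes T: "V.subspace T" "finite_dim T" "T \<subseteq> Sg K" "x K \<subseteq> T" "V.dim T \<le> r + 1"
    and M: "V.subspace M1" "V.subspace M2" "M1 \<subseteq> T" "M2 \<subseteq> T"
      "V.dim M1 = r" "V.dim M2 = r" "M1 \<noteq> M2"
  shows "V.dim ((x (K + 1) \<oplus>\<^sub>P M1) \<inter> (y (K + 1) \<oplus>\<^sub>P M2)) = r"
    and "\<not> (x (K + 1) \<oplus>\<^sub>P M1) \<inter> (y (K + 1) \<oplus>\<^sub>P M2) \<subseteq> Sg K"
proof -
  have "y (K + 1) \<subseteq> x (K + 1) \<oplus>\<^sub>P T"
    using y_point(4) join_mono[OF subset_refl T(4)] by blast
  note cones = cones_Int[OF subspace_Sg_Pi(1) x_point(1,2) x_Int_Sg y_point(1,2) y_Int_Sg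
      T(1-3) this T(5) M]
  show "V.dim ((x (K + 1) \<oplus>\<^sub>P M1) \<inter> (y (K + 1) \<oplus>\<^sub>P M2)) = r"
    and "\<not> (x (K + 1) \<oplus>\<^sub>P M1) \<inter> (y (K + 1) \<oplus>\<^sub>P M2) \<subseteq> Sg K"
    using cones K by simp_all
qed

end

lemma L_rec: "2 \<le> length J \<Longrightarrow> L J = (x (length J + 1) \<oplus>\<^sub>P L (butlast J)) \<inter>
    (y (length J + 1) \<oplus>\<^sub>P L (butlast (butlast J) @ [last J]))"
  unfolding ellJ_def by (subst rec_sp.simps) simp

lemma P_rec: "2 \<le> length J \<Longrightarrow> P J = (x (length J + 1) \<oplus>\<^sub>P P (butlast J)) \<inter>
    (y (length J + 1) \<oplus>\<^sub>P P (butlast (butlast J) @ [last J]))"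
  unfolding pJ_def by (subst rec_sp.simps) simp

lemma L_P_singleton: "L [i] = l i" "P [i] = l i \<inter> Pi 2"
  unfolding ellJ_def pJ_def by (subst rec_sp.simps, simp)+

lemma cone_Int_Pi:
  assumes "K + 1 \<le> n" "V.subspace z" "z \<subseteq> Pi (K + 1)" "V.subspace M" "M \<subseteq> Sg K"
  shows "(z \<oplus>\<^sub>P M) \<inter> Pi (K + 1) = z \<oplus>\<^sub>P (M \<inter> Pi K)"
proof -
  have "(z \<oplus>\<^sub>P M) \<inter> Pi (K + 1) = z \<oplus>\<^sub>P (M \<inter> Pi (K + 1))"
    using join_Int_modular[OF assms(2,4) subspace_Sg_Pi(2) assms(3)] .
  also have "M \<inter> Pi (K + 1) = M \<inter> Pi K" using Sg_Int_Pi[OF assms(1)] assms(5) by blast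
  finally show ?thesis .
qed

lemma x_eq_if_cone_contains:
  assumes "K \<le> n" "V.subspace z" "z \<inter> Sg K = {0}" "V.subspace w"
    and R: "V.subspace R" "V.dim R = 1" "R \<subseteq> Sg K"
    and "x K \<subseteq> z \<oplus>\<^sub>P w" "w \<subseteq> z \<oplus>\<^sub>P R"
  shows "x K = R"
proof -
  have "z \<oplus>\<^sub>P w \<subseteq> z \<oplus>\<^sub>P R" using join_least[OF subset_join1[OF assms(2)] assms(9) subspace_join] .
  then have "x K \<subseteq> (z \<oplus>\<^sub>P R) \<inter> Sg K" using assms(1,8) x_subset_Sg[of K K] by blast
  also have "\<dots> = R" using join_Int_eq_if_Int_zero[OF assms(2) subspace_Sg_Pi(1) R(1,3) assms(3)] .
  finally show ?thesis using points_eq_if_subset x_point(1,2) R(2) assms(1) by blast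
qed

lemma cones_Int_Int_Pi:
  assumes K: "2 \<le> K" "K + 1 \<le> n"
    and M: "V.subspace M1" "M1 \<subseteq> Sg K" "V.subspace M2" "M2 \<subseteq> Sg K"
  shows "((x (K + 1) \<oplus>\<^sub>P M1) \<inter> (y (K + 1) \<oplus>\<^sub>P M2)) \<inter> Pi (K + 1) =
    (x (K + 1) \<oplus>\<^sub>P (M1 \<inter> Pi K)) \<inter> (y (K + 1) \<oplus>\<^sub>P (M2 \<inter> Pi K))"
proof -
  have "((x (K + 1) \<oplus>\<^sub>P M1) \<inter> (y (K + 1) \<oplus>\<^sub>P M2)) \<inter> Pi (K + 1) =
      ((x (K + 1) \<oplus>\<^sub>P M1) \<inter> Pi (K + 1)) \<inter> ((y (K + 1) \<oplus>\<^sub>P M2) \<inter> Pi (K + 1))"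
    by blast
  then show ?thesis
    using cone_Int_Pi[OF K(2) x_point(1) x_subset_Pi M(1,2)] cone_Int_Pi[OF K(2) y_point(1)[OF K]
        y_subset_Pi[OF K] M(3,4)] K
    by simp
qed

lemma projections_of_cones_Int:
  assumes K: "2 \<le> K" "K + 1 \<le> n"
    and R1: "V.subspace R1" "V.dim R1 = 1" "R1 \<subseteq> Sg K" "R1 \<noteq> x K"
    and R2: "V.subspace R2" "V.dim R2 = 1" "R2 \<subseteq> Sg K" "R2 \<noteq> x K"
    and Q: "Q = (x (K + 1) \<oplus>\<^sub>P R1) \<inter> (y (K + 1) \<oplus>\<^sub>P R2)" "V.dim Q = 1"
  shows "Q \<noteq> x (K + 1)"
    and "(x (K + 1) \<oplus>\<^sub>P Q) \<inter> Sg K = R1"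
    and "(y (K + 1) \<oplus>\<^sub>P Q) \<inter> Sg K = R2"
proof -
  have x1: "V.subspace (x (K + 1))" "V.dim (x (K + 1)) = 1" using x_point K by simp_all
  note y1 = y_point[OF K] y_Int_Sg[OF K]
  have "V.subspace Q" unfolding Q(1) by (rule V.subspace_inter[OF subspace_join subspace_join])
  have x_K: "x K \<subseteq> x (K + 1) \<oplus>\<^sub>P y (K + 1)" "x K \<subseteq> y (K + 1) \<oplus>\<^sub>P x (K + 1)"
    using x_subset_join_x_y[OF K] join_commute by auto
  show "Q \<noteq> x (K + 1)"
  proof
    assume "Q = x (K + 1)"
    then have "x (K + 1) \<subseteq> y (K + 1) \<oplus>\<^sub>P R2" unfolding Q(1) by blast
    then have "x K = R2" using x_eq_if_cone_contains[OF _ y1(1) y1(7) x1(1) R2(1-3) x_K(2)] K by simp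
    then show False using R2(4) by simp
  qed
  moreover have "Q \<noteq> y (K + 1)"
  proof
    assume "Q = y (K + 1)"
    then have "y (K + 1) \<subseteq> x (K + 1) \<oplus>\<^sub>P R1" unfolding Q(1) by blast
    then have "x K = R1" using x_eq_if_cone_contains[OF _ x1(1) x_Int_Sg y1(1) R1(1-3) x_K(1)] K by simp
    then show False using R1(4) by simp
  qed
  ultimately show "(x (K + 1) \<oplus>\<^sub>P Q) \<inter> Sg K = R1" "(y (K + 1) \<oplus>\<^sub>P Q) \<inter> Sg K = R2"
    using join_Int_eq_if_collinear[OF x1 x_Int_Sg \<open>V.subspace Q\<close> Q(2) _ _ R1(1-3) subspace_Sg_Pi(1)]
      join_Int_eq_if_collinear[OF y1(1,2,7) \<open>V.subspace Q\<close> Q(2) _ _ R2(1-3) subspace_Sg_Pi(1)]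
      K unfolding Q(1) by auto
qed

text \<open>The negated inclusions separate
  different lengths; \<open>P J \<noteq> x (k + 1)\<close> ensures in the next step that the new point differs
  from \<open>x (k + 2)\<close> and \<open>y (k + 2)\<close>, so that projecting it from them is meaningful.\<close>
definition well_placed :: "nat \<Rightarrow> nat list \<Rightarrow> bool" where
  "well_placed k J \<longleftrightarrow>
     V.subspace (L J) \<and> V.dim (L J) = 2 \<and> L J \<subseteq> Sg (k + 1) \<and> (2 \<le> k \<longrightarrow> \<not> L J \<subseteq> Sg k) \<and>
     V.subspace (P J) \<and> V.dim (P J) = 1 \<and> P J \<subseteq> Pi (k + 1) \<and> (2 \<le> k \<longrightarrow> \<not> P J \<subseteq> Pi k) \<and>
     L J \<inter> Pi (k + 1) = P J \<and> P J \<noteq> x (k + 1)"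

definition well_placed_level :: "nat \<Rightarrow> bool" where
  "well_placed_level k \<longleftrightarrow>
     (\<forall>J. ordered_subset m J \<and> length J = k \<longrightarrow> well_placed k J) \<and>
     inj_on P {J. ordered_subset m J \<and> length J = k}"

lemma well_placed_level_1: "well_placed_level 1"
proof -
  have J_singleton: "\<exists>i \<in> {1..m}. J = [i]" if "ordered_subset m J" "length J = 1" for J
    using that unfolding ordered_subset_def by (cases J) auto
  have "well_placed 1 [i]" if "i \<in> {1..m}" for i
    using l_line[OF that] l_meet[OF that] unfolding well_placed_def L_P_singleton psub_def one_add_one
    by auto
  moreover have "inj_on P {J. ordered_subset m J \<and> length J = 1}"
  proof (rule inj_onI)
    fix J J' assume "J \<in> {J. ordered_subset m J \<and> length J = 1}"
      "J' \<in> {J. ordered_subset m J \<and> length J = 1}" "P J = P J'"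
    moreover obtain i i' where "i \<in> {1..m}" "i' \<in> {1..m}" "J = [i]" "J' = [i']"
      using J_singleton \<open>J \<in> _\<close> \<open>J' \<in> _\<close> by blast
    ultimately have "l i \<inter> Pi 2 = l i' \<inter> Pi 2" "i \<in> {1..m}" "i' \<in> {1..m}" "J = [i]" "J' = [i']"
      using L_P_singleton(2) by simp_all
    then show "J = J'" using l_dist by blast
  qed
  ultimately show ?thesis unfolding well_placed_level_def using J_singleton by blast
qed

lemma L_P_snoc_subset:
  assumes "1 \<le> length J0"
  shows "L (J0 @ [c]) \<subseteq> x (length J0 + 2) \<oplus>\<^sub>P L J0"
    and "P (J0 @ [c]) \<subseteq> x (length J0 + 2) \<oplus>\<^sub>P P J0"
  using L_rec[of "J0 @ [c]"] P_rec[of "J0 @ [c]"] assms by auto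

lemma line_carrier:
  assumes K: "2 \<le> K" "K + 1 \<le> n" and len: "length J0 = K - 2"
    and A: "well_placed (K - 1) (J0 @ [b])" and B: "well_placed (K - 1) (J0 @ [a])"
    and J0: "3 \<le> K \<longrightarrow> well_placed (K - 2) J0"
  obtains T where "V.subspace T" "finite_dim T" "T \<subseteq> Sg K" "x K \<subseteq> T" "V.dim T \<le> 3"
    "L (J0 @ [b]) \<subseteq> T" "L (J0 @ [a]) \<subseteq> T"
proof (cases "K = 2")
  case True
  have "L (J0 @ [b]) \<subseteq> Sg K" "L (J0 @ [a]) \<subseteq> Sg K"
    using A B K unfolding well_placed_def by (simp_all add: Suc_diff_le)
  then show ?thesis
    using that[of "Sg K"] subspace_Sg_Pi(1) finite_dim_Sg_Pi(1) dim_Sg_Pi(1) x_subset_Sg[of K K] True K by simp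
next
  case False
  then have K3: "3 \<le> K" "K - 2 + 1 = K - 1" "length J0 + 2 = K" using K len by simp_all
  then have L0: "V.subspace (L J0)" "V.dim (L J0) = 2" "L J0 \<subseteq> Sg (K - 1)"
    using J0 unfolding well_placed_def by simp_all
  then have fin: "finite_dim (L J0)" by (intro finite_dim_if_dim_pos) simp
  have xK: "V.subspace (x K)" "V.dim (x K) = 1" "finite_dim (x K)" using x_point K by simp_all
  show ?thesis
  proof (rule that[of "x K \<oplus>\<^sub>P L J0"])
    show "V.subspace (x K \<oplus>\<^sub>P L J0)" by (rule subspace_join)
    show "finite_dim (x K \<oplus>\<^sub>P L J0)" by (rule finite_dim_join[OF xK(3) fin])
    show "x K \<oplus>\<^sub>P L J0 \<subseteq> Sg K"
      using join_least[OF x_subset_Sg _ subspace_Sg_Pi(1)] L0(3) Sg_Pi_mono(1)[of "K - 1" K] K by simp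
    show "x K \<subseteq> x K \<oplus>\<^sub>P L J0" by (rule subset_join1[OF xK(1)])
    show "V.dim (x K \<oplus>\<^sub>P L J0) \<le> 3"
      using dim_join_le[OF xK(1) L0(1) xK(3) fin] xK(2) L0(2) by simp
    show "L (J0 @ [b]) \<subseteq> x K \<oplus>\<^sub>P L J0" "L (J0 @ [a]) \<subseteq> x K \<oplus>\<^sub>P L J0"
      using L_P_snoc_subset(1)[of J0] K3 by simp_all
  qed
qed

lemma point_carrier:
  assumes K: "2 \<le> K" "K + 1 \<le> n" and len: "length J0 = K - 2"
    and A: "well_placed (K - 1) (J0 @ [b])" and B: "well_placed (K - 1) (J0 @ [a])"
    and J0: "3 \<le> K \<longrightarrow> well_placed (K - 2) J0"
  obtains T where "V.subspace T" "finite_dim T" "T \<subseteq> Pi K" "x K \<subseteq> T" "V.dim T \<le> 2"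
    "P (J0 @ [b]) \<subseteq> T" "P (J0 @ [a]) \<subseteq> T"
proof (cases "K = 2")
  case True
  have "P (J0 @ [b]) \<subseteq> Pi K" "P (J0 @ [a]) \<subseteq> Pi K"
    using A B K unfolding well_placed_def by (simp_all add: Suc_diff_le)
  then show ?thesis
    using that[of "Pi K"] subspace_Sg_Pi(2) finite_dim_Sg_Pi(2) dim_Sg_Pi(2) x_subset_Pi[of K K] True K by simp
next
  case False
  then have K3: "3 \<le> K" "K - 2 + 1 = K - 1" "length J0 + 2 = K" using K len by simp_all
  then have P0: "V.subspace (P J0)" "V.dim (P J0) = 1" "P J0 \<subseteq> Pi (K - 1)"
    using J0 unfolding well_placed_def by simp_all
  then have fin: "finite_dim (P J0)" by (intro finite_dim_if_dim_pos) simp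
  have xK: "V.subspace (x K)" "V.dim (x K) = 1" "finite_dim (x K)" using x_point K by simp_all
  show ?thesis
  proof (rule that[of "x K \<oplus>\<^sub>P P J0"])
    show "V.subspace (x K \<oplus>\<^sub>P P J0)" by (rule subspace_join)
    show "finite_dim (x K \<oplus>\<^sub>P P J0)" by (rule finite_dim_join[OF xK(3) fin])
    show "x K \<oplus>\<^sub>P P J0 \<subseteq> Pi K"
      using join_least[OF x_subset_Pi _ subspace_Sg_Pi(2)] P0(3) Sg_Pi_mono(2)[of "K - 1" K] K by simp
    show "x K \<subseteq> x K \<oplus>\<^sub>P P J0" by (rule subset_join1[OF xK(1)])
    show "V.dim (x K \<oplus>\<^sub>P P J0) \<le> 2"
      using dim_join_le[OF xK(1) P0(1) xK(3) fin] xK(2) P0(2) by simp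
    show "P (J0 @ [b]) \<subseteq> x K \<oplus>\<^sub>P P J0" "P (J0 @ [a]) \<subseteq> x K \<oplus>\<^sub>P P J0"
      using L_P_snoc_subset(2)[of J0] K3 by simp_all
  qed
qed

lemma well_placed_step:
  assumes K: "2 \<le> K" "K + 1 \<le> n"
    and A: "well_placed (K - 1) A" and B: "well_placed (K - 1) B" and "P A \<noteq> P B"
    and TL: "V.subspace TL" "finite_dim TL" "TL \<subseteq> Sg K" "x K \<subseteq> TL" "V.dim TL \<le> 3"
      "L A \<subseteq> TL" "L B \<subseteq> TL"
    and TP: "V.subspace TP" "finite_dim TP" "TP \<subseteq> Pi K" "x K \<subseteq> TP" "V.dim TP \<le> 2"
      "P A \<subseteq> TP" "P B \<subseteq> TP"
    and LJ: "L J = (x (K + 1) \<oplus>\<^sub>P L A) \<inter> (y (K + 1) \<oplus>\<^sub>P L B)"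
    and PJ: "P J = (x (K + 1) \<oplus>\<^sub>P P A) \<inter> (y (K + 1) \<oplus>\<^sub>P P B)"
  shows "well_placed K J"
    and "(x (K + 1) \<oplus>\<^sub>P P J) \<inter> Sg K = P A"
    and "(y (K + 1) \<oplus>\<^sub>P P J) \<inter> Sg K = P B"
proof -
  have "K - 1 + 1 = K" using K by simp
  then have a: "V.subspace (L A)" "V.dim (L A) = 2" "L A \<subseteq> Sg K" "V.subspace (P A)"
      "V.dim (P A) = 1" "P A \<subseteq> Pi K" "L A \<inter> Pi K = P A" "P A \<noteq> x K"
    and b: "V.subspace (L B)" "V.dim (L B) = 2" "L B \<subseteq> Sg K" "V.subspace (P B)"
      "V.dim (P B) = 1" "P B \<subseteq> Pi K" "L B \<inter> Pi K = P B" "P B \<noteq> x K"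
    using A B unfolding well_placed_def by simp_all
  have "L A \<noteq> L B" using \<open>P A \<noteq> P B\<close> a(7) b(7) by metis
  have P_Sg: "P A \<subseteq> Sg K" "P B \<subseteq> Sg K" using a(6) b(6) Pi_subset_Sg by blast+
  have sub: "V.subspace (L J)" "V.subspace (P J)"
    unfolding LJ PJ by (rule V.subspace_inter[OF subspace_join subspace_join])+
  have dim_LJ: "V.dim (L J) = 2" and "\<not> L J \<subseteq> Sg K"
    using cones_Int_step[OF K TL(1-4) _ a(1) b(1) TL(6,7) a(2) b(2) \<open>L A \<noteq> L B\<close>] TL(5)
    unfolding LJ by simp_all
  have dim_PJ: "V.dim (P J) = 1" and "\<not> P J \<subseteq> Pi K"
    using cones_Int_step[OF K TP(1,2) _ TP(4) _ a(4) b(4) TP(6,7) a(5) b(5) \<open>P A \<noteq> P B\<close>]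
      TP(3,5) Pi_subset_Sg unfolding PJ by auto
  have "x (K + 1) \<oplus>\<^sub>P L A \<subseteq> Sg (K + 1)"
    using join_least[OF x_subset_Sg _ subspace_Sg_Pi(1)] a(3) Sg_Pi_mono(1)[of K "K + 1"] K by simp
  then have "L J \<subseteq> Sg (K + 1)" unfolding LJ by blast
  have "x (K + 1) \<oplus>\<^sub>P P A \<subseteq> Pi (K + 1)"
    using join_least[OF x_subset_Pi _ subspace_Sg_Pi(2)] a(6) Sg_Pi_mono(2)[of K "K + 1"] K by simp
  then have "P J \<subseteq> Pi (K + 1)" unfolding PJ by blast
  have "L J \<inter> Pi (K + 1) = P J"
    unfolding LJ PJ cones_Int_Int_Pi[OF K a(1,3) b(1,3)] a(7) b(7) ..
  note projections = projections_of_cones_Int[OF K a(4,5) P_Sg(1) a(8) b(4,5) P_Sg(2) b(8) PJ dim_PJ]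
  show "well_placed K J"
    unfolding well_placed_def using sub dim_LJ dim_PJ \<open>L J \<subseteq> Sg (K + 1)\<close> \<open>\<not> L J \<subseteq> Sg K\<close>
      \<open>P J \<subseteq> Pi (K + 1)\<close> \<open>\<not> P J \<subseteq> Pi K\<close> \<open>L J \<inter> Pi (K + 1) = P J\<close> projections(1)
    by simp
  show "(x (K + 1) \<oplus>\<^sub>P P J) \<inter> Sg K = P A" "(y (K + 1) \<oplus>\<^sub>P P J) \<inter> Sg K = P B"
    using projections(2,3) .
qed

lemma well_placed_of_levels:
  assumes K: "2 \<le> K" "K + 1 \<le> n"
    and prev: "well_placed_level (K - 1)" and prev2: "3 \<le> K \<longrightarrow> well_placed_level (K - 2)"
    and J: "ordered_subset m (J0 @ [b, a])" "length J0 = K - 2"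
  shows "well_placed K (J0 @ [b, a])"
    and "(x (K + 1) \<oplus>\<^sub>P P (J0 @ [b, a])) \<inter> Sg K = P (J0 @ [b])"
    and "(y (K + 1) \<oplus>\<^sub>P P (J0 @ [b, a])) \<inter> Sg K = P (J0 @ [a])"
proof -
  note sub = ordered_subset_butlast[OF J(1)]
  have len: "length (J0 @ [b]) = K - 1" "length (J0 @ [a]) = K - 1" "length (J0 @ [b, a]) = K"
    using J(2) K by simp_all
  have A: "well_placed (K - 1) (J0 @ [b])" and B: "well_placed (K - 1) (J0 @ [a])"
    using prev sub(1,2) len(1,2) unfolding well_placed_level_def by simp_all
  have "inj_on P {J. ordered_subset m J \<and> length J = K - 1}"
    using prev unfolding well_placed_level_def by blast
  then have "P (J0 @ [b]) \<noteq> P (J0 @ [a])"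
    by (rule inj_on_contraD) (use sub(1,2,4) len(1,2) in simp_all)
  have J0: "3 \<le> K \<longrightarrow> well_placed (K - 2) J0"
    using prev2 sub(3) J(2) unfolding well_placed_level_def by simp
  obtain TL where TL: "V.subspace TL" "finite_dim TL" "TL \<subseteq> Sg K" "x K \<subseteq> TL" "V.dim TL \<le> 3"
    "L (J0 @ [b]) \<subseteq> TL" "L (J0 @ [a]) \<subseteq> TL"
    using line_carrier[OF K J(2) A B J0] by blast
  obtain TP where TP: "V.subspace TP" "finite_dim TP" "TP \<subseteq> Pi K" "x K \<subseteq> TP" "V.dim TP \<le> 2"
    "P (J0 @ [b]) \<subseteq> TP" "P (J0 @ [a]) \<subseteq> TP"
    using point_carrier[OF K J(2) A B J0] by blast
  have parents: "butlast (J0 @ [b, a]) = J0 @ [b]"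
    "butlast (J0 @ [b]) @ [last (J0 @ [b, a])] = J0 @ [a]"
    by (simp_all add: butlast_append)
  have "2 \<le> length (J0 @ [b, a])" by simp
  note recs = L_rec[OF this, unfolded parents len(3)] P_rec[OF this, unfolded parents len(3)]
  show "well_placed K (J0 @ [b, a])"
    and "(x (K + 1) \<oplus>\<^sub>P P (J0 @ [b, a])) \<inter> Sg K = P (J0 @ [b])"
    and "(y (K + 1) \<oplus>\<^sub>P P (J0 @ [b, a])) \<inter> Sg K = P (J0 @ [a])"
    by (rule well_placed_step[OF K A B \<open>P (J0 @ [b]) \<noteq> P (J0 @ [a])\<close> TL TP recs])+
qed

lemma inj_on_pJ_step:
  assumes K: "2 \<le> K" "K + 1 \<le> n"
    and prev: "well_placed_level (K - 1)" and prev2: "3 \<le> K \<longrightarrow> well_placed_level (K - 2)"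
  shows "inj_on P {J. ordered_subset m J \<and> length J = K}"
proof (rule inj_onI)
  fix J J' assume "J \<in> {J. ordered_subset m J \<and> length J = K}"
    "J' \<in> {J. ordered_subset m J \<and> length J = K}" and eq: "P J = P J'"
  then have J_K: "ordered_subset m J" "length J = K" "ordered_subset m J'" "length J' = K" by simp_all
  have "2 \<le> length J" "2 \<le> length J'" using J_K(2,4) K by simp_all
  then obtain J0 b a J0' b' a'
    where J: "J = J0 @ [b, a]" "length J0 = length J - 2"
      and J': "J' = J0' @ [b', a']" "length J0' = length J' - 2"
    by (metis split_last_two)
  then have "length J0 = K - 2" "length J0' = K - 2" using J_K(2,4) by simp_all
  have sub: "ordered_subset m (J0 @ [b, a])" "ordered_subset m (J0' @ [b', a'])"
    using J_K(1,3) J(1) J'(1) by simp_all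
  note projections = well_placed_of_levels(2,3)[OF K prev prev2]
  have eq_b: "P (J0 @ [b]) = P (J0' @ [b'])" and eq_a: "P (J0 @ [a]) = P (J0' @ [a'])"
    using projections[OF sub(1) \<open>length J0 = K - 2\<close>] projections[OF sub(2) \<open>length J0' = K - 2\<close>] eq
    unfolding J(1) J'(1) by simp_all
  have inj_prev: "inj_on P {J. ordered_subset m J \<and> length J = K - 1}"
    using prev unfolding well_placed_level_def by blast
  have mem: "J0 @ [c] \<in> {J. ordered_subset m J \<and> length J = K - 1}"
    "J0' @ [c'] \<in> {J. ordered_subset m J \<and> length J = K - 1}"
    if "c \<in> {a, b}" "c' \<in> {a', b'}" for c c'
    using ordered_subset_butlast[OF sub(1)] ordered_subset_butlast[OF sub(2)]
      \<open>length J0 = K - 2\<close> \<open>length J0' = K - 2\<close> K that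
    by auto
  have "J0 @ [b] = J0' @ [b']" using inj_onD[OF inj_prev eq_b] mem[of b b'] by simp
  moreover have "J0 @ [a] = J0' @ [a']" using inj_onD[OF inj_prev eq_a] mem[of a a'] by simp
  ultimately show "J = J'" using J(1) J'(1) by simp
qed

lemma well_placed_level_step:
  assumes K: "2 \<le> K" "K + 1 \<le> n"
    and prev: "well_placed_level (K - 1)" and prev2: "3 \<le> K \<longrightarrow> well_placed_level (K - 2)"
  shows "well_placed_level K"
proof -
  have "well_placed K J" if J: "ordered_subset m J" "length J = K" for J
  proof -
    have "2 \<le> length J" using J(2) K by simp
    then obtain J0 b a where "J = J0 @ [b, a]" "length J0 = length J - 2" by (rule split_last_two)
    then show ?thesis using well_placed_of_levels(1)[OF K prev prev2] J by simp
  qed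
  then show ?thesis using inj_on_pJ_step[OF K prev prev2] unfolding well_placed_level_def by blast
qed

lemma well_placed_level: "1 \<le> k \<Longrightarrow> k + 1 \<le> n \<Longrightarrow> well_placed_level k"
proof (induction k rule: less_induct)
  case (less k)
  show ?case
  proof (cases "k = 1")
    case True
    then show ?thesis using well_placed_level_1 by simp
  next
    case False
    then have "2 \<le> k" "k + 1 \<le> n" using less.prems by simp_all
    then show ?thesis using well_placed_level_step less.IH by simp
  qed
qed

lemma well_placed_of_ordered_subset:
  assumes "ordered_subset m J" "1 \<le> length J" "length J \<le> n - 1"
  shows "well_placed (length J) J"
  using well_placed_level[of "length J"] assms n2 unfolding well_placed_level_def by simp

lemma line_point_of_ordered_subset:
  assumes "ordered_subset m J" "1 \<le> length J" "length J \<le> n - 1"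
  shows "pline n (L J)" "ppoint n (P J)" "L J \<inter> Pi (length J + 1) = P J"
proof -
  have "Sg (length J + 1) \<subseteq> ambient n" using Sg_subset_ambient assms(3) n2 by simp
  then show "pline n (L J)" "ppoint n (P J)" "L J \<inter> Pi (length J + 1) = P J"
    using well_placed_of_ordered_subset[OF assms] Pi_subset_Sg[of "length J + 1"]
    unfolding well_placed_def psub_def by blast+
qed

lemma distinct_if_length_less:
  assumes "1 \<le> k" "k < k'" "well_placed k J" "well_placed k' J'"
  shows "L J \<noteq> L J'" "P J \<noteq> P J'"
proof -
  have "L J \<subseteq> Sg k'" "P J \<subseteq> Pi k'"
    using assms(2,3) Sg_Pi_mono[of "k + 1" k'] unfolding well_placed_def by auto
  moreover have "\<not> L J' \<subseteq> Sg k'" "\<not> P J' \<subseteq> Pi k'"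
    using assms(1,2,4) unfolding well_placed_def by simp_all
  ultimately show "L J \<noteq> L J'" "P J \<noteq> P J'" by auto
qed

lemma distinct_of_ordered_subsets:
  assumes J: "ordered_subset m J" "1 \<le> length J" "length J \<le> n - 1"
    and J': "ordered_subset m J'" "1 \<le> length J'" "length J' \<le> n - 1"
    and "J \<noteq> J'"
  shows "L J \<noteq> L J' \<and> P J \<noteq> P J'"
proof -
  note wp = well_placed_of_ordered_subset[OF J] well_placed_of_ordered_subset[OF J']
  consider "length J < length J'" | "length J' < length J" | "length J = length J'" by linarith
  then show ?thesis
  proof cases
    case 1
    then show ?thesis using distinct_if_length_less[OF J(2) _ wp] by blast
  next
    case 2
    then show ?thesis using distinct_if_length_less[OF J'(2) _ wp(2,1)] by metis
  next
    case 3
    have "inj_on P {K. ordered_subset m K \<and> length K = length J}"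
      using well_placed_level J(2,3) n2 unfolding well_placed_level_def by simp
    then have "P J \<noteq> P J'" using inj_on_contraD \<open>J \<noteq> J'\<close> J(1) J'(1) 3 by fastforce
    moreover have "L J \<inter> Pi (length J + 1) = P J" "L J' \<inter> Pi (length J + 1) = P J'"
      using wp 3 unfolding well_placed_def by simp_all
    ultimately show ?thesis by metis
  qed
qed

end

theorem lemma2p1:
  fixes n m :: nat
    and x y l :: "nat \<Rightarrow> (nat \<Rightarrow> 'k::field) set"
  assumes n2: "n \<ge> 2"
    and gp: "general_position n x"
    and y_pt: "\<And>i. 3 \<le> i \<Longrightarrow> i \<le> n \<Longrightarrow>
        ppoint n (y i) \<and> y i \<subseteq> x (i - 1) \<oplus>\<^sub>P x i \<and> y i \<noteq> x (i - 1) \<and> y i \<noteq> x i"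
    and l_line: "\<And>i. i \<in> {1..m} \<Longrightarrow> pline n (l i) \<and> l i \<subseteq> Sigma_sp x 2"
    and l_meet: "\<And>i. i \<in> {1..m} \<Longrightarrow> ppoint n (l i \<inter> pi_sp x 2) \<and> l i \<inter> pi_sp x 2 \<noteq> x 2"
    and l_dist: "\<And>i j. i \<in> {1..m} \<Longrightarrow> j \<in> {1..m} \<Longrightarrow> i \<noteq> j \<Longrightarrow>
        l i \<inter> pi_sp x 2 \<noteq> l j \<inter> pi_sp x 2"
  shows "(\<forall>J. ordered_subset m J \<and> 1 \<le> length J \<and> length J \<le> n - 1 \<longrightarrow>
            pline n (ellJ x y l J) \<and> ppoint n (pJ x y l J) \<and>
            ellJ x y l J \<inter> pi_sp x (length J + 1) = pJ x y l J)
       \<and> (\<forall>J J'. ordered_subset m J \<and> 1 \<le> length J \<and> length J \<le> n - 1 \<and>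
            ordered_subset m J' \<and> 1 \<le> length J' \<and> length J' \<le> n - 1 \<and> J \<noteq> J' \<longrightarrow>
            ellJ x y l J \<noteq> ellJ x y l J' \<and> pJ x y l J \<noteq> pJ x y l J')"
proof -
  interpret configuration n m x y l
    by (rule configuration.intro) (fact n2 gp y_pt l_line l_meet l_dist)+
  show ?thesis using line_point_of_ordered_subset distinct_of_ordered_subsets by blast
qed

end
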